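(* Let $P$ be a Poisson tensor on $\mathbb{R}^3$, let $H\in C^\infty(\mathbb{R}^3)$, let $S\in C^\infty(\mathbb{R}^3)$ satisfy $PdS=0$, and let $g$ be the symmetric tensor with components $g^{ij}=H^iH^j-\delta^{ij}\sum_k H^kH^k$. If $x$ is a regular equilibrium of the system $\dot{x}=PdH+gdS$, then either $x$ is a critical point of $H$, or the level sets of $S$ and of $H$ through $x$ are tangent to each other at $x$.
   Context: $\mathbb{R}^3$ carries the standard Euclidean metric, used to identify tangent and cotangent spaces with $\mathbb{R}^3$; $H^i=H_i=\partial H/\partial x^i$. A Poisson tensor is a skew-symmetric bivector field satisfying the Jacobi identity. A regular equilibrium is an equilibrium point $x$ with $P(x)\neq 0$. *)

theory Defs
  imports "HOL-Analysis.Analysis"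
begin

definition pd :: "3 \<Rightarrow> (real^3 \<Rightarrow> real) \<Rightarrow> real^3 \<Rightarrow> real" where
  "pd i f x = deriv (\<lambda>t. f (x + t *\<^sub>R axis i 1)) 0"

text \<open>Gradient (= dH under the Euclidean identification), H^i = H_i = partial H / partial x^i.\<close>
definition grad :: "(real^3 \<Rightarrow> real) \<Rightarrow> real^3 \<Rightarrow> real^3" where
  "grad f x = (\<chi> i. pd i f x)"

text \<open>C-infinity: f is continuous and all partial derivatives exist everywhere and are
  again C-infinity (coinductively, i.e. partial derivatives of every order exist and are continuous).\<close>
coinductive smooth :: "(real^3 \<Rightarrow> real) \<Rightarrow> bool" where
  "\<lbrakk> continuous_on UNIV f;
     \<forall>i x. ((\<lambda>t. f (x + t *\<^sub>R axis i 1)) has_real_derivative D i x) (at 0);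
     \<forall>i. smooth (D i) \<rbrakk> \<Longrightarrow> smooth f"

definition poisson_tensor :: "(real^3 \<Rightarrow> real^3^3) \<Rightarrow> bool" where
  "poisson_tensor P \<longleftrightarrow>
     (\<forall>i j. smooth (\<lambda>x. P x $ i $ j)) \<and>
     (\<forall>x i j. P x $ i $ j = - (P x $ j $ i)) \<and>
     (\<forall>x i j k. (\<Sum>l\<in>UNIV.
         P x $ i $ l * pd l (\<lambda>y. P y $ j $ k) x
       + P x $ j $ l * pd l (\<lambda>y. P y $ k $ i) x
       + P x $ k $ l * pd l (\<lambda>y. P y $ i $ j) x) = 0)"

definition gmat :: "(real^3 \<Rightarrow> real) \<Rightarrow> real^3 \<Rightarrow> real^3^3" where
  "gmat H x = (\<chi> i j. grad H x $ i * grad H x $ j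
       - (if i = j then 1 else 0) * (\<Sum>k\<in>UNIV. grad H x $ k * grad H x $ k))"

definition metriplectic_field ::
  "(real^3 \<Rightarrow> real^3^3) \<Rightarrow> (real^3 \<Rightarrow> real) \<Rightarrow> (real^3 \<Rightarrow> real) \<Rightarrow> real^3 \<Rightarrow> real^3" where
  "metriplectic_field P H S x = P x *v grad H x + gmat H x *v grad S x"

end

theory Submission
  imports Defs
begin

text \<open>At a point, a skew-symmetric \<open>P\<close> acts as \<open>v \<mapsto> w \<times> v\<close> for its axial vector \<open>w\<close>,
  and \<open>g\<close> acts as \<open>v \<mapsto> h \<times> (h \<times> v)\<close> with \<open>h = dH\<close>. Writing \<open>u = dS\<close>, the hypotheses become
  \<open>w \<times> u = 0\<close> and \<open>w \<times> h + h \<times> (h \<times> u) = 0\<close> with \<open>w \<noteq> 0\<close>. The first gives \<open>u = k w\<close>;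
  then \<open>m = h \<times> w\<close> satisfies \<open>m = k (h \<times> m)\<close>, which is orthogonal to \<open>m\<close>, so \<open>m = 0\<close>.
  Hence \<open>h\<close> and \<open>u\<close> are both parallel to \<open>w\<close>.\<close>

unbundle cross3_syntax

definition axial_vector :: "real^3^3 \<Rightarrow> real^3" where
  "axial_vector A = vector [A $ 3 $ 2, A $ 1 $ 3, A $ 2 $ 1]"

lemma skew_matrix_vector_mult_eq_cross:
  assumes "\<And>i j. A $ i $ j = - A $ j $ i"
  shows "A *v v = axial_vector A \<times> v"
proof -
  have "A $ i $ i = 0" for i
    using assms[of i i] by simp
  then show ?thesis
    using assms[of 1 2] assms[of 1 3] assms[of 2 3]
    by (simp add: axial_vector_def cross3_def vec_eq_iff forall_3 sum_3
        matrix_vector_mult_def algebra_simps)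
qed

lemma axial_vector_eq_0_iff:
  assumes "\<And>i j. A $ i $ j = - A $ j $ i"
  shows "axial_vector A = 0 \<longleftrightarrow> A = 0"
proof
  assume "axial_vector A = 0"
  then have "A *v v = 0" for v
    using skew_matrix_vector_mult_eq_cross[OF assms] by simp
  then show "A = 0"
    by (simp add: matrix_eq)
qed (simp add: axial_vector_def vec_eq_iff forall_3)

lemma gmat_vector_mult_eq_cross_cross:
  "gmat H x *v v = grad H x \<times> (grad H x \<times> v)"
  by (simp add: gmat_def Lagrange matrix_vector_mult_def inner_vec_def sum_3 vec_eq_iff
      forall_3 algebra_simps)

lemma cross_eq_0_imp_scaleR:
  fixes x y :: "real^3"
  assumes "x \<noteq> 0" and "x \<times> y = 0"
  obtains c where "y = c *\<^sub>R x"
  using assms by (metis cross_eq_0 collinear_lemma scale_zero_left)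

lemma cross_equilibrium_imp_parallel:
  fixes w u h :: "real^3"
  assumes "w \<noteq> 0" and "w \<times> u = 0" and "w \<times> h + h \<times> (h \<times> u) = 0"
  shows "h = 0 \<or> (\<exists>c. u = c *\<^sub>R h)"
proof -
  obtain k where u: "u = k *\<^sub>R w"
    using assms(1,2) by (rule cross_eq_0_imp_scaleR)
  define m where "m = h \<times> w"
  have m_eq: "m = k *\<^sub>R (h \<times> m)"
    using assms(3) unfolding u m_def
    by (simp add: cross_mult_right cross_skew[of w h] eq_neg_iff_add_eq_0 add.commute)
  have "m \<bullet> m = k * (m \<bullet> (h \<times> m))"
    by (subst (2) m_eq) simp
  then have "w \<times> h = 0"
    by (simp add: dot_cross_self m_def cross_skew[of h w])
  with assms(1) obtain c where h: "h = c *\<^sub>R w"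
    by (rule cross_eq_0_imp_scaleR)
  show ?thesis
  proof (cases "c = 0")
    case False
    then have "u = (k / c) *\<^sub>R h"
      by (simp add: u h)
    then show ?thesis by blast
  qed (simp add: h)
qed

theorem mainTheorem5:
  fixes P :: "real^3 \<Rightarrow> real^3^3" and H S :: "real^3 \<Rightarrow> real" and x :: "real^3"
  assumes "poisson_tensor P"
    and "smooth H" and "smooth S"
    and "\<forall>y. P y *v grad S y = 0"
    and "metriplectic_field P H S x = 0"
    and "P x \<noteq> 0"
  shows "grad H x = 0 \<or> (\<exists>c. grad S x = c *\<^sub>R grad H x)"
proof -
  have skew: "\<And>i j. P x $ i $ j = - P x $ j $ i"
    using assms(1) unfolding poisson_tensor_def by blast
  note P_cross = skew_matrix_vector_mult_eq_cross[OF skew]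
  have "axial_vector (P x) \<noteq> 0"
    using assms(6) axial_vector_eq_0_iff[OF skew] by blast
  moreover have "axial_vector (P x) \<times> grad S x = 0"
    using assms(4) P_cross by metis
  moreover have "axial_vector (P x) \<times> grad H x + grad H x \<times> (grad H x \<times> grad S x) = 0"
    using assms(5) by (simp add: metriplectic_field_def P_cross gmat_vector_mult_eq_cross_cross)
  ultimately show ?thesis
    by (rule cross_equilibrium_imp_parallel)
qed

end
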